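(* For every $\epsilon>0$, no impartial selection mechanism (deterministic or randomized, and possibly returning no winner with positive probability) has approximation ratio better than $2-\epsilon$ against all uniform priors; that is, for every such mechanism $f$ there is a uniform prior $\mathbf{P}$ with $\frac{\mathbb{E}_{\mathbf{x}\sim\mathbf{P}}[\Delta(\mathbf{x})]}{\mathbb{E}_{\mathbf{x}\sim\mathbf{P}}[d_{f(\mathbf{x})}(\mathbf{x})]}>2-\epsilon$. (In fact, two-node uniform instances with sufficiently small popularity $p$ suffice.)
   Context: A nomination profile on a finite agent set $N$ is a directed graph $\mathbf{x}$ on $N$ without self-loops; $d_j(\mathbf{x})$ is the in-degree of $j$ and $\Delta(\mathbf{x})=\max_j d_j(\mathbf{x})$. A (randomized) selection mechanism maps each profile to a probability distribution over $N\cup\{\text{no winner}\}$; it is impartial if for every agent $i$, every profile $\mathbf{x}$, and every alternative set $x_i'$ of outgoing edges of $i$, the probability that $i$ is selected is the same at $\mathbf{x}$ and at the profile obtained by replacing $i$'s outgoing edges with $x_i'$. The in-degree of "no winner" is taken as $0$, and $\mathbb{E}[d_{f(\mathbf{x})}(\mathbf{x})]$ is over both the profile and the mechanism's randomness. Uniform prior with popularity $p$: each directed edge $(i,j)$, $i\neq j$, is present independently with probability $p$. *)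

theory Defs
  imports "HOL-Probability.Probability"
begin

definition all_edges :: "nat \<Rightarrow> (nat \<times> nat) set" where
  "all_edges n = {(i, j). i < n \<and> j < n \<and> i \<noteq> j}"

definition profiles :: "nat \<Rightarrow> (nat \<times> nat) set set" where
  "profiles n = Pow (all_edges n)"

definition indeg :: "(nat \<times> nat) set \<Rightarrow> nat \<Rightarrow> nat" where
  "indeg x j = card {i. (i, j) \<in> x}"

definition maxdeg :: "nat \<Rightarrow> (nat \<times> nat) set \<Rightarrow> nat" where
  "maxdeg n x = Max (insert 0 (indeg x ` {..<n}))"

text \<open>Uniform prior with popularity p: each edge present independently with prob. p.\<close>
definition uniform_prob :: "nat \<Rightarrow> real \<Rightarrow> (nat \<times> nat) set \<Rightarrow> real" where
  "uniform_prob n p x = p ^ card x * (1 - p) ^ (card (all_edges n) - card x)"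

text \<open>A (randomized) selection mechanism: for each number of agents n and each profile,
  a distribution over Some i (agent i selected) and None (no winner).\<close>
definition is_mechanism :: "(nat \<Rightarrow> (nat \<times> nat) set \<Rightarrow> nat option pmf) \<Rightarrow> bool" where
  "is_mechanism f \<longleftrightarrow>
     (\<forall>n. \<forall>x\<in>profiles n. set_pmf (f n x) \<subseteq> insert None (Some ` {..<n}))"

definition impartial :: "(nat \<Rightarrow> (nat \<times> nat) set \<Rightarrow> nat option pmf) \<Rightarrow> bool" where
  "impartial f \<longleftrightarrow>
     (\<forall>n. \<forall>i<n. \<forall>x\<in>profiles n. \<forall>S. S \<subseteq> {..<n} - {i} \<longrightarrow>
        pmf (f n x) (Some i) =
        pmf (f n ({e \<in> x. fst e \<noteq> i} \<union> (\<lambda>j. (i, j)) ` S)) (Some i))"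

text \<open>Expected in-degree of the selected agent (no winner has in-degree 0), over the
  mechanism's randomness.\<close>
definition winner_deg :: "(nat \<Rightarrow> (nat \<times> nat) set \<Rightarrow> nat option pmf) \<Rightarrow> nat \<Rightarrow> (nat \<times> nat) set \<Rightarrow> real" where
  "winner_deg f n x = (\<Sum>i<n. pmf (f n x) (Some i) * real (indeg x i))"

definition exp_maxdeg :: "nat \<Rightarrow> real \<Rightarrow> real" where
  "exp_maxdeg n p = (\<Sum>x\<in>profiles n. uniform_prob n p x * real (maxdeg n x))"

definition exp_winner_deg :: "(nat \<Rightarrow> (nat \<times> nat) set \<Rightarrow> nat option pmf) \<Rightarrow> nat \<Rightarrow> real \<Rightarrow> real" where
  "exp_winner_deg f n p = (\<Sum>x\<in>profiles n. uniform_prob n p x * winner_deg f n x)"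

end

theory Submission
  imports Defs
begin

text \<open>Two agents suffice. Impartiality means that agent 1's chance of winning at the profile
  where only 0 nominates 1 equals its chance at the complete profile, and symmetrically for
  agent 0. Hence the expected in-degree of the winner is p times the total winning probability
  at the complete profile, at most p, while the expected maximum in-degree is
  1 - (1 - p)^2 = 2p - p^2. The ratio 2 - p tends to 2 as p \<rightarrow> 0.\<close>

lemma pmf_add_pmf_le_1:
  assumes "x \<noteq> y"
  shows "pmf q x + pmf q y \<le> 1"
proof -
  have "measure_pmf.prob q {x, y} = pmf q x + pmf q y"
    using assms by (subst measure_pmf.finite_measure_eq_sum_singleton) (auto simp: measure_pmf_single)
  then show ?thesis
    by (metis measure_pmf.prob_le_1)
qed

lemma all_edges_2: "all_edges 2 = {(0, 1), (1, 0)}"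
  unfolding all_edges_def by auto

lemma profiles_2: "profiles 2 = {{}, {(0, 1)}, {(1, 0)}, {(0, 1), (1, 0)}}"
  unfolding profiles_def all_edges_2 by (auto simp: Pow_insert)

lemma sum_profiles_2:
  "(\<Sum>x\<in>profiles 2. g x) = g {} + g {(0, 1)} + g {(1, 0)} + g {(0, 1), (1, 0)}"
  unfolding profiles_2 by (simp add: insert_commute add.assoc)

lemma uniform_prob_2:
  "uniform_prob 2 p {} = (1 - p)\<^sup>2"
  "uniform_prob 2 p {(0, 1)} = p * (1 - p)"
  "uniform_prob 2 p {(1, 0)} = p * (1 - p)"
  "uniform_prob 2 p {(0, 1), (1, 0)} = p\<^sup>2"
  unfolding uniform_prob_def all_edges_2 by (auto simp: power2_eq_square)

lemma maxdeg_2: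
  "maxdeg 2 {} = 0" "maxdeg 2 {(0, 1)} = 1" "maxdeg 2 {(1, 0)} = 1" "maxdeg 2 {(0, 1), (1, 0)} = 1"
  unfolding maxdeg_def by (auto simp: lessThan_Suc indeg_def numeral_2_eq_2)

lemma exp_maxdeg_2: "exp_maxdeg 2 p = 2 * p - p\<^sup>2"
  unfolding exp_maxdeg_def sum_profiles_2 uniform_prob_2 maxdeg_2
  by (simp add: power2_eq_square algebra_simps)

lemma impartial_2_single_edge:
  assumes "impartial f"
  shows "pmf (f 2 {(0, 1)}) (Some 1) = pmf (f 2 {(0, 1), (1, 0)}) (Some 1)"
    and "pmf (f 2 {(1, 0)}) (Some 0) = pmf (f 2 {(0, 1), (1, 0)}) (Some 0)"
proof -
  have swap: "pmf (f 2 x) (Some i) = pmf (f 2 ({e \<in> x. fst e \<noteq> i} \<union> (\<lambda>j. (i, j)) ` S)) (Some i)"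
    if "i < 2" "x \<in> profiles 2" "S \<subseteq> {..<2} - {i}" for i x S
    using assms that unfolding impartial_def by blast
  have "{e \<in> {(0, 1)}. fst e \<noteq> 1} \<union> (\<lambda>j. (1, j)) ` {0} = {(0, 1), (1 :: nat, 0 :: nat)}"
    by auto
  then show "pmf (f 2 {(0, 1)}) (Some 1) = pmf (f 2 {(0, 1), (1, 0)}) (Some 1)"
    using swap[of 1 "{(0, 1)}" "{0}"] by (auto simp: profiles_2)
  have "{e \<in> {(1, 0)}. fst e \<noteq> 0} \<union> (\<lambda>j. (0, j)) ` {1} = {(0, 1), (1 :: nat, 0 :: nat)}"
    by auto
  then show "pmf (f 2 {(1, 0)}) (Some 0) = pmf (f 2 {(0, 1), (1, 0)}) (Some 0)"
    using swap[of 0 "{(1, 0)}" "{1}"] by (auto simp: profiles_2)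
qed

lemma exp_winner_deg_2:
  assumes "impartial f"
  shows "exp_winner_deg f 2 p
           = p * (pmf (f 2 {(0, 1), (1, 0)}) (Some 0) + pmf (f 2 {(0, 1), (1, 0)}) (Some 1))"
proof -
  have "winner_deg f 2 x
          = pmf (f 2 x) (Some 0) * real (indeg x 0) + pmf (f 2 x) (Some 1) * real (indeg x 1)" for x
    unfolding winner_deg_def by (simp add: numeral_2_eq_2 lessThan_Suc)
  then show ?thesis
    unfolding exp_winner_deg_def sum_profiles_2 uniform_prob_2
    using impartial_2_single_edge[OF assms]
    by (simp add: indeg_def power2_eq_square algebra_simps)
qed

lemma exp_winner_deg_2_bounds:
  assumes "impartial f" and "0 \<le> p"
  shows "0 \<le> exp_winner_deg f 2 p" and "exp_winner_deg f 2 p \<le> p"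
  using pmf_add_pmf_le_1[of "Some 0" "Some 1" "f 2 {(0, 1), (1, 0)}"] assms
  by (auto simp: exp_winner_deg_2 mult_left_le)

theorem mainTheorem19:
  fixes f :: "nat \<Rightarrow> (nat \<times> nat) set \<Rightarrow> nat option pmf" and \<epsilon> :: real
  assumes "\<epsilon> > 0" and "is_mechanism f" and "impartial f"
  shows "\<exists>n p. 0 < p \<and> p \<le> 1 \<and> (2 - \<epsilon>) * exp_winner_deg f n p < exp_maxdeg n p"
proof -
  define p where "p = min (\<epsilon> / 2) (1 / 2)"
  have p: "0 < p" "p \<le> 1" "p < \<epsilon>"
    using assms(1) by (auto simp: p_def)
  note W = exp_winner_deg_2_bounds[OF assms(3), of p]
  have "(2 - \<epsilon>) * exp_winner_deg f 2 p \<le> max 0 ((2 - \<epsilon>) * p)"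
    using W p by (cases "2 - \<epsilon> \<ge> 0") (auto simp: mult_left_mono mult_nonpos_nonneg)
  also have "\<dots> < exp_maxdeg 2 p"
    using p by (simp add: exp_maxdeg_2 power2_eq_square algebra_simps max_def mult_strict_right_mono)
  finally show ?thesis
    using p by blast
qed

end
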